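(* Let $B\ge 0$, $E>0$ and $L>0$ be constants, and on the domain $\{(r,\theta)\,:\, r>1,\ 0<\theta<\pi\}$ define $$U(r,\theta)=\frac{L^2\Lambda^2}{2r^2\sin^2\theta}-\frac{E^2}{2\Lambda^2\Gamma},\qquad \Lambda=1+\frac{B^2}{4}r^2\sin^2\theta,\qquad \Gamma=1-\frac1r .$$ If $(r_c,\theta_c)$ is a critical point of $U$ in this domain, i.e. $\partial U/\partial r=\partial U/\partial\theta=0$ at $(r_c,\theta_c)$, then $\theta_c=\pi/2$. Consequently every fixed point of the Hamiltonian system with Hamiltonian $$H=\frac{\Gamma}{2\Lambda^2}p_r^2+\frac{p_\theta^2}{2r^2\Lambda^2}+U(r,\theta)$$ on $\{(p_r,p_\theta,r,\theta): r>1,\ 0<\theta<\pi\}$ has $p_r=p_\theta=0$ and $\theta=\pi/2$ (it corresponds to a circular orbit in the equatorial plane).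
   Context: This is the reduced (after elimination of the cyclic coordinates $t,\varphi$) Hamiltonian system for time-like geodesics of neutral particles in the Schwarzschild–Melvin spacetime, in dimensionless units where the horizon is $r=1$; $E$ is the energy, $L$ the angular momentum about the symmetry axis, and $B$ the dimensionless magnetic field parameter. The canonical variables are $(p_r,p_\theta,r,\theta)$ with $\dot r=\partial H/\partial p_r$, $\dot\theta=\partial H/\partial p_\theta$, $\dot p_r=-\partial H/\partial r$, $\dot p_\theta=-\partial H/\partial\theta$. *)

theory Defs
  imports "HOL-Analysis.Analysis"
begin

definition SM_Lambda :: "real \<Rightarrow> real \<Rightarrow> real \<Rightarrow> real" where
  "SM_Lambda B r \<theta> = 1 + (B^2 / 4) * r^2 * (sin \<theta>)^2"

definition SM_Gamma :: "real \<Rightarrow> real" where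
  "SM_Gamma r = 1 - 1 / r"

definition SM_U :: "real \<Rightarrow> real \<Rightarrow> real \<Rightarrow> real \<Rightarrow> real \<Rightarrow> real" where
  "SM_U B E L r \<theta> =
     L^2 * (SM_Lambda B r \<theta>)^2 / (2 * r^2 * (sin \<theta>)^2)
     - E^2 / (2 * (SM_Lambda B r \<theta>)^2 * SM_Gamma r)"

definition SM_H :: "real \<Rightarrow> real \<Rightarrow> real \<Rightarrow> real \<Rightarrow> real \<Rightarrow> real \<Rightarrow> real \<Rightarrow> real" where
  "SM_H B E L pr p\<theta> r \<theta> =
     SM_Gamma r / (2 * (SM_Lambda B r \<theta>)^2) * pr^2
     + p\<theta>^2 / (2 * r^2 * (SM_Lambda B r \<theta>)^2)
     + SM_U B E L r \<theta>"

end

theory Submission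
  imports Defs
begin

text \<open>
  The potential depends on the position only through the distance \<open>\<rho> = r sin \<theta>\<close> from the
  symmetry axis (which fixes \<open>\<Lambda>\<close>) and through the lapse \<open>\<Gamma>(r)\<close>. By the chain rule,
  \<open>\<partial>\<^sub>\<theta>U = r cos \<theta> \<partial>\<^sub>\<rho>U\<close> and \<open>\<partial>\<^sub>rU = sin \<theta> \<partial>\<^sub>\<rho>U + E\<^sup>2 \<Gamma>'(r) / (2 \<Lambda>\<^sup>2 \<Gamma>\<^sup>2)\<close>, where the last
  term is strictly positive since \<open>\<Gamma>' = 1/r\<^sup>2\<close>. Off the equatorial plane \<open>cos \<theta> \<noteq> 0\<close>, so
  \<open>\<partial>\<^sub>\<theta>U = 0\<close> forces \<open>\<partial>\<^sub>\<rho>U = 0\<close>, and then \<open>\<partial>\<^sub>rU > 0\<close>. For the Hamiltonian, the kinetic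
  term is a positive definite quadratic form in the momenta, so the momentum derivatives
  vanish only at \<open>p\<^sub>r = p\<^sub>\<theta> = 0\<close>, where \<open>H\<close> reduces to \<open>U\<close>.
\<close>

text \<open>The derivative \<open>\<partial>\<^sub>\<rho>U\<close> at fixed \<open>\<Gamma>\<close>, where \<open>\<rho> = r sin \<theta>\<close>.\<close>

definition SM_U_rho_slope :: "real \<Rightarrow> real \<Rightarrow> real \<Rightarrow> real \<Rightarrow> real \<Rightarrow> real" where
  "SM_U_rho_slope B E L r \<theta> =
     L^2 * SM_Lambda B r \<theta> * (B^2 * (r * sin \<theta>)^2 / 2 - SM_Lambda B r \<theta>) / (r * sin \<theta>)^3
     + B^2 * E^2 * (r * sin \<theta>) / (2 * (SM_Lambda B r \<theta>)^3 * SM_Gamma r)"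

lemma SM_Lambda_ge_1: "SM_Lambda B r \<theta> \<ge> 1"
  by (simp add: SM_Lambda_def)

lemma SM_Gamma_pos: "r > 1 \<Longrightarrow> SM_Gamma r > 0"
  by (simp add: SM_Gamma_def)

lemma has_real_derivative_SM_Gamma:
  "r \<noteq> 0 \<Longrightarrow> (SM_Gamma has_real_derivative 1 / r^2) (at r)"
  unfolding SM_Gamma_def by (rule derivative_eq_intros refl | simp add: power2_eq_square)+

lemma has_real_derivative_SM_Lambda_theta:
  "((\<lambda>x. SM_Lambda B r x) has_real_derivative B^2 / 2 * r^2 * sin \<theta> * cos \<theta>) (at \<theta>)"
  unfolding SM_Lambda_def by (rule derivative_eq_intros refl | simp)+

lemma has_real_derivative_SM_Lambda_r:
  "((\<lambda>x. SM_Lambda B x \<theta>) has_real_derivative B^2 / 2 * r * (sin \<theta>)^2) (at r)"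
  unfolding SM_Lambda_def by (rule derivative_eq_intros refl | simp)+

lemma has_real_derivative_SM_U_theta:
  assumes "r > 1" "sin \<theta> \<noteq> 0"
  shows "((\<lambda>x. SM_U B E L r x) has_real_derivative
           SM_U_rho_slope B E L r \<theta> * (r * cos \<theta>)) (at \<theta>)"
proof -
  have nonzero: "r \<noteq> 0" "SM_Lambda B r \<theta> \<noteq> 0" "SM_Gamma r \<noteq> 0"
    using SM_Lambda_ge_1[of B r \<theta>] SM_Gamma_pos[OF assms(1)] assms(1) by auto
  show ?thesis
    unfolding SM_U_def SM_U_rho_slope_def
    by (rule derivative_eq_intros has_real_derivative_SM_Lambda_theta refl
        | simp add: assms nonzero)+
       (simp add: assms nonzero field_simps, algebra)
qed

lemma has_real_derivative_SM_U_r: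
  assumes "r > 1" "sin \<theta> \<noteq> 0"
  shows "((\<lambda>x. SM_U B E L x \<theta>) has_real_derivative
           SM_U_rho_slope B E L r \<theta> * sin \<theta>
           + E^2 / (2 * (SM_Lambda B r \<theta> * SM_Gamma r * r)^2)) (at r)"
proof -
  have nonzero: "r \<noteq> 0" "SM_Lambda B r \<theta> \<noteq> 0" "SM_Gamma r \<noteq> 0"
    using SM_Lambda_ge_1[of B r \<theta>] SM_Gamma_pos[OF assms(1)] assms(1) by auto
  show ?thesis
    unfolding SM_U_def SM_U_rho_slope_def
    by (rule derivative_eq_intros has_real_derivative_SM_Lambda_r
          has_real_derivative_SM_Gamma refl | simp add: assms nonzero)+
       (simp add: assms nonzero field_simps, algebra)
qed

lemma SM_U_critical_point_equatorial:
  assumes "r > 1" "0 < \<theta>" "\<theta> < pi" "E \<noteq> 0"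
    and dr: "((\<lambda>x. SM_U B E L x \<theta>) has_real_derivative 0) (at r)"
    and d\<theta>: "((\<lambda>x. SM_U B E L r x) has_real_derivative 0) (at \<theta>)"
  shows "\<theta> = pi / 2"
proof -
  let ?N = "SM_U_rho_slope B E L r \<theta>"
  let ?pull = "E^2 / (2 * (SM_Lambda B r \<theta> * SM_Gamma r * r)^2)"
  have "sin \<theta> \<noteq> 0"
    using sin_gt_zero assms(2,3) by force
  have cos_eq: "?N * (r * cos \<theta>) = 0"
    using DERIV_unique[OF has_real_derivative_SM_U_theta d\<theta>] assms(1) \<open>sin \<theta> \<noteq> 0\<close> .
  have sin_eq: "?N * sin \<theta> + ?pull = 0"
    using DERIV_unique[OF has_real_derivative_SM_U_r dr] assms(1) \<open>sin \<theta> \<noteq> 0\<close> .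
  have "?pull > 0"
    using SM_Lambda_ge_1[of B r \<theta>] SM_Gamma_pos[OF assms(1)] assms(1,4) by simp
  with sin_eq have "?N \<noteq> 0"
    by auto
  with cos_eq assms(1) have "cos \<theta> = 0"
    by simp
  then show ?thesis
    using cos_inj_pi[of \<theta> "pi / 2"] assms(2,3) by simp
qed

lemma SM_H_zero_momenta: "SM_H B E L 0 0 r \<theta> = SM_U B E L r \<theta>"
  by (simp add: SM_H_def)

lemma SM_H_critical_momenta:
  assumes "r > 1"
    and "((\<lambda>x. SM_H B E L x p\<theta> r \<theta>) has_real_derivative 0) (at pr)"
    and "((\<lambda>x. SM_H B E L pr x r \<theta>) has_real_derivative 0) (at p\<theta>)"
  shows "pr = 0 \<and> p\<theta> = 0"
proof -
  have nonzero: "r \<noteq> 0" "SM_Lambda B r \<theta> \<noteq> 0" "SM_Gamma r \<noteq> 0"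
    using SM_Lambda_ge_1[of B r \<theta>] SM_Gamma_pos[OF assms(1)] assms(1) by auto
  have "((\<lambda>x. SM_H B E L x p\<theta> r \<theta>) has_real_derivative
          SM_Gamma r / (2 * (SM_Lambda B r \<theta>)^2) * (2 * pr)) (at pr)"
    unfolding SM_H_def by (rule derivative_eq_intros refl | simp)+
  from DERIV_unique[OF this assms(2)] have "pr = 0"
    using nonzero by simp
  moreover have "((\<lambda>x. SM_H B E L pr x r \<theta>) has_real_derivative
          2 * p\<theta> / (2 * r^2 * (SM_Lambda B r \<theta>)^2)) (at p\<theta>)"
    unfolding SM_H_def by (rule derivative_eq_intros refl | simp add: nonzero)+
  from DERIV_unique[OF this assms(3)] have "p\<theta> = 0"
    using nonzero by simp
  ultimately show ?thesis ..
qed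

theorem mainTheorem1:
  fixes B E L :: real
  assumes "B \<ge> 0" and "E > 0" and "L > 0"
  shows "(\<forall>rc \<theta>c. rc > 1 \<and> 0 < \<theta>c \<and> \<theta>c < pi
            \<and> ((\<lambda>r. SM_U B E L r \<theta>c) has_real_derivative 0) (at rc)
            \<and> ((\<lambda>\<theta>. SM_U B E L rc \<theta>) has_real_derivative 0) (at \<theta>c)
            \<longrightarrow> \<theta>c = pi / 2)
       \<and> (\<forall>pr p\<theta> r \<theta>. r > 1 \<and> 0 < \<theta> \<and> \<theta> < pi
            \<and> ((\<lambda>x. SM_H B E L x p\<theta> r \<theta>) has_real_derivative 0) (at pr)
            \<and> ((\<lambda>x. SM_H B E L pr x r \<theta>) has_real_derivative 0) (at p\<theta>)
            \<and> ((\<lambda>x. SM_H B E L pr p\<theta> x \<theta>) has_real_derivative 0) (at r)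
            \<and> ((\<lambda>x. SM_H B E L pr p\<theta> r x) has_real_derivative 0) (at \<theta>)
            \<longrightarrow> pr = 0 \<and> p\<theta> = 0 \<and> \<theta> = pi / 2)"
proof -
  have "E \<noteq> 0"
    using assms(2) by simp
  note equatorial = SM_U_critical_point_equatorial[OF _ _ _ this]
  show ?thesis
  proof (rule conjI; intro allI impI)
    show "\<theta>c = pi / 2" if "rc > 1 \<and> 0 < \<theta>c \<and> \<theta>c < pi
            \<and> ((\<lambda>r. SM_U B E L r \<theta>c) has_real_derivative 0) (at rc)
            \<and> ((\<lambda>\<theta>. SM_U B E L rc \<theta>) has_real_derivative 0) (at \<theta>c)" for rc \<theta>c
      using equatorial that by blast
  next
    fix pr p\<theta> r \<theta>
    assume crit: "r > 1 \<and> 0 < \<theta> \<and> \<theta> < pi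
            \<and> ((\<lambda>x. SM_H B E L x p\<theta> r \<theta>) has_real_derivative 0) (at pr)
            \<and> ((\<lambda>x. SM_H B E L pr x r \<theta>) has_real_derivative 0) (at p\<theta>)
            \<and> ((\<lambda>x. SM_H B E L pr p\<theta> x \<theta>) has_real_derivative 0) (at r)
            \<and> ((\<lambda>x. SM_H B E L pr p\<theta> r x) has_real_derivative 0) (at \<theta>)"
    then have momenta: "pr = 0 \<and> p\<theta> = 0"
      using SM_H_critical_momenta by blast
    with crit have "((\<lambda>x. SM_U B E L x \<theta>) has_real_derivative 0) (at r)"
      and "((\<lambda>x. SM_U B E L r x) has_real_derivative 0) (at \<theta>)"
      by (simp_all add: SM_H_zero_momenta)
    with crit have "\<theta> = pi / 2"
      using equatorial by blast
    with momenta show "pr = 0 \<and> p\<theta> = 0 \<and> \<theta> = pi / 2"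
      by simp
  qed
qed

end
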